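(* As operators on the tensor product of any two finite-dimensional spin representations of $U_q(\mathfrak{su}_2)$, $$Q_2:=1\otimes Q=\mathrm{Tr}_a\big(L^+_{a1}L^+_{a2}L^-_{a2}(L^+_{a1})^{-1}M_a\big),$$ where $Q=(q-q^{-1})^2FE+q^{2H+1}+q^{-2H-1}$.
   Context: $q$ generic complex, $U_q(\mathfrak{su}_2)$ generated by $E,F,q^H$ with $q^HE=qEq^H$, $q^HF=q^{-1}Fq^H$, $[E,F]=(q^{2H}-q^{-2H})/(q-q^{-1})$. An auxiliary space $a\cong\mathbb{C}^2$ (spin $1/2$) is traced over with $\mathrm{Tr}_a$. $L^-$ and $L^+$ are the $2\times2$ matrices with entries in $U_q(\mathfrak{su}_2)$ $$L^-=\begin{pmatrix}q^H&0\\ \frac{q-q^{-1}}{q^{1/2}}E&q^{-H}\end{pmatrix},\qquad L^+=\begin{pmatrix}q^H&\frac{q-q^{-1}}{q^{1/2}}F\\0&q^{-H}\end{pmatrix}$$ (these are the universal $R$-matrix $\mathcal{R}$, resp. $\mathcal{R}_{21}$, with first factor in the spin-$1/2$ representation). $L^\pm_{ai}$ denotes the matrix acting on space $a$ with entries placed in the $i$-th tensor factor; $M_a=\mathrm{diag}(q,q^{-1})$ acting on space $a$. *)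

theory Defs
  imports "Jordan_Normal_Form.Matrix" Complex_Main
begin

text \<open>We parametrise by s = q^(1/2) (a fixed square root of q), so q = s^2.
The spin-j representation V_j (j = n/2, n :: nat) is realised on C^(n+1) with basis
e_0,...,e_n, where e_k has weight m = k - n/2 (so 2m = 2k - n is an integer).
  q^(aH+b) e_k = s^(a(2k-n)+2b) e_k,  E e_k = e_(k+1),  F e_k = [k][n-k+1] e_(k-1),
with [x] = (q^x - q^(-x))/(q - q^(-1)).\<close>

definition qint :: "complex \<Rightarrow> int \<Rightarrow> complex" where
  "qint s x = ((s^2) powi x - (s^2) powi (-x)) / (s^2 - inverse (s^2))"

definition spin_qH :: "complex \<Rightarrow> nat \<Rightarrow> int \<Rightarrow> int \<Rightarrow> complex mat" where
  "spin_qH s n a b = mat (n+1) (n+1)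
     (\<lambda>(i,j). if i = j then s powi (a * (2 * int i - int n) + 2 * b) else 0)"

definition spin_E :: "nat \<Rightarrow> complex mat" where
  "spin_E n = mat (n+1) (n+1) (\<lambda>(i,j). if i = j + 1 then 1 else 0)"

definition spin_F :: "complex \<Rightarrow> nat \<Rightarrow> complex mat" where
  "spin_F s n = mat (n+1) (n+1)
     (\<lambda>(i,j). if j = i + 1 then qint s (int j) * qint s (int n - int j + 1) else 0)"

definition casimir_Q :: "complex \<Rightarrow> nat \<Rightarrow> complex mat" where
  "casimir_Q s n = (s^2 - inverse (s^2))^2 \<cdot>\<^sub>m (spin_F s n * spin_E n)
      + spin_qH s n 2 1 + spin_qH s n (-2) (-1)"

text \<open>Kronecker (tensor) product of matrices; index (i,k) of A \<otimes> B is i * dim B + k.\<close>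
definition kron :: "complex mat \<Rightarrow> complex mat \<Rightarrow> complex mat" where
  "kron A B = mat (dim_row A * dim_row B) (dim_col A * dim_col B)
     (\<lambda>(i,j). A $$ (i div dim_row B, j div dim_col B) * B $$ (i mod dim_row B, j mod dim_col B))"

definition unit2 :: "nat \<Rightarrow> nat \<Rightarrow> complex mat" where
  "unit2 \<alpha> \<beta> = mat 2 2 (\<lambda>(i,j). if i = \<alpha> \<and> j = \<beta> then 1 else 0)"

definition L_plus :: "complex \<Rightarrow> nat \<Rightarrow> nat \<Rightarrow> nat \<Rightarrow> complex mat" where
  "L_plus s n \<alpha> \<beta> =
     (if \<alpha> = 0 \<and> \<beta> = 0 then spin_qH s n 1 0
      else if \<alpha> = 0 \<and> \<beta> = 1 then ((s^2 - inverse (s^2)) / s) \<cdot>\<^sub>m spin_F s n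
      else if \<alpha> = 1 \<and> \<beta> = 0 then 0\<^sub>m (n+1) (n+1)
      else spin_qH s n (-1) 0)"

definition L_minus :: "complex \<Rightarrow> nat \<Rightarrow> nat \<Rightarrow> nat \<Rightarrow> complex mat" where
  "L_minus s n \<alpha> \<beta> =
     (if \<alpha> = 0 \<and> \<beta> = 0 then spin_qH s n 1 0
      else if \<alpha> = 0 \<and> \<beta> = 1 then 0\<^sub>m (n+1) (n+1)
      else if \<alpha> = 1 \<and> \<beta> = 0 then ((s^2 - inverse (s^2)) / s) \<cdot>\<^sub>m spin_E n
      else spin_qH s n (-1) 0)"

text \<open>X_(a1) and X_(a2) as operators on a \<otimes> V1 \<otimes> V2 (dims d1, d2 of V1, V2).\<close>
definition on_a1 :: "nat \<Rightarrow> nat \<Rightarrow> (nat \<Rightarrow> nat \<Rightarrow> complex mat) \<Rightarrow> complex mat" where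
  "on_a1 d1 d2 X =
       kron (kron (unit2 0 0) (X 0 0)) (1\<^sub>m d2) + kron (kron (unit2 0 1) (X 0 1)) (1\<^sub>m d2)
     + kron (kron (unit2 1 0) (X 1 0)) (1\<^sub>m d2) + kron (kron (unit2 1 1) (X 1 1)) (1\<^sub>m d2)"

definition on_a2 :: "nat \<Rightarrow> nat \<Rightarrow> (nat \<Rightarrow> nat \<Rightarrow> complex mat) \<Rightarrow> complex mat" where
  "on_a2 d1 d2 X =
       kron (kron (unit2 0 0) (1\<^sub>m d1)) (X 0 0) + kron (kron (unit2 0 1) (1\<^sub>m d1)) (X 0 1)
     + kron (kron (unit2 1 0) (1\<^sub>m d1)) (X 1 0) + kron (kron (unit2 1 1) (1\<^sub>m d1)) (X 1 1)"

definition M_a :: "complex \<Rightarrow> nat \<Rightarrow> nat \<Rightarrow> complex mat" where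
  "M_a s d1 d2 = kron (kron (mat 2 2 (\<lambda>(i,j). if i = j then (if i = 0 then s^2 else inverse (s^2)) else 0))
                     (1\<^sub>m d1)) (1\<^sub>m d2)"

definition trace_a :: "nat \<Rightarrow> complex mat \<Rightarrow> complex mat" where
  "trace_a d P = mat d d (\<lambda>(i,j). P $$ (i, j) + P $$ (d + i, d + j))"

end

theory Submission
  imports Defs
begin

text \<open>View an operator on \<open>a \<otimes> V\<^sub>1 \<otimes> V\<^sub>2\<close> as a \<open>2 \<times> 2\<close> block matrix over the auxiliary
  index. The entries of \<open>X = L\<^sup>+ L\<^sup>-\<close> act on \<open>V\<^sub>2\<close>, those of \<open>L\<^sup>+\<close>, \<open>(L\<^sup>+)\<^sup>-\<^sup>1\<close> and \<open>M\<close> on \<open>V\<^sub>1\<close>,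
  so they commute and the partial trace splits as
  \<open>Tr\<^sub>a (L\<^sub>a\<^sub>1 X\<^sub>a\<^sub>2 R\<^sub>a\<^sub>1) = \<Sum>\<^sub>\<beta>\<^sub>\<gamma> (\<Sum>\<^sub>\<alpha> L\<^sub>\<alpha>\<^sub>\<beta> R\<^sub>\<gamma>\<^sub>\<alpha>) \<otimes> X\<^sub>\<beta>\<^sub>\<gamma>\<close> with \<open>R = (L\<^sup>+)\<^sup>-\<^sup>1 M\<close>.
  For \<open>L = L\<^sup>+\<close> the commutation rule \<open>F q\<^sup>H = q q\<^sup>H F\<close> makes the inner sum vanish for \<open>\<beta> \<noteq> \<gamma>\<close>
  and equal \<open>M\<^sub>\<beta>\<^sub>\<beta>\<close> for \<open>\<beta> = \<gamma>\<close>, so only \<open>1 \<otimes> (q X\<^sub>0\<^sub>0 + q\<^sup>-\<^sup>1 X\<^sub>1\<^sub>1)\<close> survives, and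
  \<open>q X\<^sub>0\<^sub>0 + q\<^sup>-\<^sup>1 X\<^sub>1\<^sub>1 = q\<^sup>2\<^sup>H\<^sup>+\<^sup>1 + (q - q\<^sup>-\<^sup>1)\<^sup>2 F E + q\<^sup>-\<^sup>2\<^sup>H\<^sup>-\<^sup>1 = Q\<close>.\<close>

section \<open>Kronecker products\<close>

lemma dim_kron [simp]:
  "dim_row (kron A B) = dim_row A * dim_row B" "dim_col (kron A B) = dim_col A * dim_col B"
  by (simp_all add: kron_def)

lemma kron_carrier_mat [simp]:
  "A \<in> carrier_mat a b \<Longrightarrow> B \<in> carrier_mat c d \<Longrightarrow> kron A B \<in> carrier_mat (a * c) (b * d)"
  unfolding carrier_mat_def by simp

lemma index_kron [simp]:
  "i < dim_row A * dim_row B \<Longrightarrow> j < dim_col A * dim_col B \<Longrightarrow>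
   kron A B $$ (i, j) = A $$ (i div dim_row B, j div dim_col B) * B $$ (i mod dim_row B, j mod dim_col B)"
  by (simp add: kron_def)

lemma div_mod_less_mult:
  fixes i a b :: nat
  assumes "i < a * b"
  shows "i div b < a" "i mod b < b"
proof -
  show "i div b < a" using assms by (simp add: less_mult_imp_div_less)
  have "b > 0" using assms by (cases b) auto
  then show "i mod b < b" by simp
qed

lemma mult_add_less_mult:
  fixes x y a b :: nat
  assumes "x < a" "y < b"
  shows "x * b + y < a * b"
proof -
  have "x * b + y < Suc x * b" using assms(2) by simp
  also have "\<dots> \<le> a * b" using assms(1) by (intro mult_le_mono1) simp
  finally show ?thesis .
qed

lemma sum_atLeast0LessThan_mult:
  fixes a b :: nat
  shows "(\<Sum>k\<in>{0..<a * b}. f k) = (\<Sum>x\<in>{0..<a}. \<Sum>y\<in>{0..<b}. f (x * b + y))"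
proof -
  have "(\<Sum>k\<in>{0..<a * b}. f k) = (\<Sum>x<a. \<Sum>k\<in>{x * b..<x * b + b}. f k)"
    by (simp add: sum.nat_group atLeast0LessThan)
  also have "\<dots> = (\<Sum>x\<in>{0..<a}. \<Sum>y\<in>{0..<b}. f (x * b + y))"
    by (simp add: atLeast0LessThan[symmetric] sum.shift_bounds_nat_ivl[where m = 0, simplified] add.commute)
  finally show ?thesis .
qed

lemma kron_mult:
  assumes A: "A \<in> carrier_mat a1 a2" and B: "B \<in> carrier_mat b1 b2"
    and C: "C \<in> carrier_mat a2 c" and D: "D \<in> carrier_mat b2 d"
  shows "kron A B * kron C D = kron (A * C) (B * D)"
proof (rule eq_matI)
  fix i j assume "i < dim_row (kron (A * C) (B * D))" and "j < dim_col (kron (A * C) (B * D))"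
  then have i: "i < a1 * b1" and j: "j < c * d" using A B C D by auto
  note bounds = div_mod_less_mult[OF i] div_mod_less_mult[OF j]
  have "(kron A B * kron C D) $$ (i, j) = (\<Sum>k\<in>{0..<a2 * b2}. kron A B $$ (i, k) * kron C D $$ (k, j))"
    using i j A B C D by (simp add: scalar_prod_def)
  also have "\<dots> = (\<Sum>x\<in>{0..<a2}. \<Sum>y\<in>{0..<b2}.
      (A $$ (i div b1, x) * C $$ (x, j div d)) * (B $$ (i mod b1, y) * D $$ (y, j mod d)))"
    unfolding sum_atLeast0LessThan_mult
  proof (intro sum.cong refl)
    fix x y assume x: "x \<in> {0..<a2}" and y: "y \<in> {0..<b2}"
    have "x * b2 + y < a2 * b2"
      using x y by (simp add: mult_add_less_mult)
    then show "kron A B $$ (i, x * b2 + y) * kron C D $$ (x * b2 + y, j)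
      = (A $$ (i div b1, x) * C $$ (x, j div d)) * (B $$ (i mod b1, y) * D $$ (y, j mod d))"
      using i j y A B C D by (simp add: ac_simps)
  qed
  also have "\<dots> = kron (A * C) (B * D) $$ (i, j)"
    using i j bounds A B C D by (simp add: scalar_prod_def sum_product)
  finally show "(kron A B * kron C D) $$ (i, j) = kron (A * C) (B * D) $$ (i, j)" .
qed (use A B C D in auto)

lemma kron_assoc: "kron (kron A B) C = kron A (kron B C)"
proof (rule eq_matI)
  fix i j assume "i < dim_row (kron A (kron B C))" and "j < dim_col (kron A (kron B C))"
  then have i: "i < dim_row A * dim_row B * dim_row C" and j: "j < dim_col A * dim_col B * dim_col C"
    by (simp_all add: mult.assoc)
  let ?rb = "dim_row B" and ?rc = "dim_row C" and ?cb = "dim_col B" and ?cc = "dim_col C"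
  have "?rc > 0" "?cc > 0" using i j by (auto intro!: gr0I)
  then have "i mod (?rb * ?rc) div ?rc = i div ?rc mod ?rb" "i mod (?rb * ?rc) mod ?rc = i mod ?rc"
    "i div (?rb * ?rc) = i div ?rc div ?rb"
    "j mod (?cb * ?cc) div ?cc = j div ?cc mod ?cb" "j mod (?cb * ?cc) mod ?cc = j mod ?cc"
    "j div (?cb * ?cc) = j div ?cc div ?cb"
    by (auto simp: mod_mult2_eq div_mult2_eq mult.commute[of ?rb] mult.commute[of ?cb])
  moreover have "i mod (?rb * ?rc) < ?rb * ?rc" "j mod (?cb * ?cc) < ?cb * ?cc"
    using div_mod_less_mult[of i "dim_row A"] div_mod_less_mult[of j "dim_col A"] i j
    by (simp_all add: mult.assoc)
  ultimately show "kron (kron A B) C $$ (i, j) = kron A (kron B C) $$ (i, j)"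
    using i j div_mod_less_mult[OF i] div_mod_less_mult[OF j] by (simp add: mult.assoc)
qed (simp_all add: mult.assoc)

lemma kron_add_left:
  assumes "A \<in> carrier_mat a b" and "B \<in> carrier_mat a b"
  shows "kron (A + B) C = kron A C + kron B C"
proof (rule eq_matI)
  fix i j assume "i < dim_row (kron A C + kron B C)" and "j < dim_col (kron A C + kron B C)"
  then have i: "i < a * dim_row C" and j: "j < b * dim_col C" using assms by simp_all
  then show "kron (A + B) C $$ (i, j) = (kron A C + kron B C) $$ (i, j)"
    using div_mod_less_mult[OF i] div_mod_less_mult[OF j] assms by (simp add: algebra_simps)
qed (use assms in simp_all)

lemma kron_add_right:
  assumes "B \<in> carrier_mat a b" and "C \<in> carrier_mat a b"
  shows "kron A (B + C) = kron A B + kron A C"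
proof (rule eq_matI)
  fix i j assume "i < dim_row (kron A B + kron A C)" and "j < dim_col (kron A B + kron A C)"
  then have i: "i < dim_row A * a" and j: "j < dim_col A * b" using assms by simp_all
  then show "kron A (B + C) $$ (i, j) = (kron A B + kron A C) $$ (i, j)"
    using div_mod_less_mult[OF i] div_mod_less_mult[OF j] assms by (simp add: algebra_simps)
qed (use assms in simp_all)

lemma kron_smult_left: "kron (c \<cdot>\<^sub>m A) B = c \<cdot>\<^sub>m kron A B"
proof (rule eq_matI)
  fix i j assume "i < dim_row (c \<cdot>\<^sub>m kron A B)" and "j < dim_col (c \<cdot>\<^sub>m kron A B)"
  then have i: "i < dim_row A * dim_row B" and j: "j < dim_col A * dim_col B" by simp_all
  then show "kron (c \<cdot>\<^sub>m A) B $$ (i, j) = (c \<cdot>\<^sub>m kron A B) $$ (i, j)"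
    using div_mod_less_mult[OF i] div_mod_less_mult[OF j] by simp
qed simp_all

lemma kron_zero_left: "kron (0\<^sub>m a b) C = 0\<^sub>m (a * dim_row C) (b * dim_col C)"
proof (rule eq_matI)
  fix i j assume "i < dim_row (0\<^sub>m (a * dim_row C) (b * dim_col C) :: complex mat)"
    and "j < dim_col (0\<^sub>m (a * dim_row C) (b * dim_col C) :: complex mat)"
  then have i: "i < a * dim_row C" and j: "j < b * dim_col C" by simp_all
  then show "kron (0\<^sub>m a b) C $$ (i, j) = 0\<^sub>m (a * dim_row C) (b * dim_col C) $$ (i, j)"
    using div_mod_less_mult[OF i] div_mod_less_mult[OF j] by simp
qed simp_all

lemma kron_one: "kron (1\<^sub>m a) (1\<^sub>m b) = 1\<^sub>m (a * b)"
proof (rule eq_matI)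
  fix i j assume "i < dim_row (1\<^sub>m (a * b) :: complex mat)" "j < dim_col (1\<^sub>m (a * b) :: complex mat)"
  then have i: "i < a * b" and j: "j < a * b" by simp_all
  have "(i div b = j div b \<and> i mod b = j mod b) = (i = j)"
    by (metis div_mult_mod_eq)
  then show "kron (1\<^sub>m a) (1\<^sub>m b) $$ (i, j) = 1\<^sub>m (a * b) $$ (i, j)"
    using i j div_mod_less_mult[OF i] div_mod_less_mult[OF j] by auto
qed simp_all

section \<open>Operators on the auxiliary space as block matrices\<close>

text \<open>A family \<open>B \<alpha> \<beta>\<close> stands for the \<open>2 \<times> 2\<close> block matrix with \<open>\<alpha>, \<beta> \<in> {0, 1}\<close>; its values at
  other indices are junk (\<^const>\<open>L_plus\<close> returns \<open>q\<^sup>-\<^sup>H\<close> there), hence the guards \<open>\<alpha> < 2\<close>, \<open>\<beta> < 2\<close>.\<close>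

definition aux_blocks :: "(nat \<Rightarrow> nat \<Rightarrow> 'a mat) \<Rightarrow> 'a mat" where
  "aux_blocks B = four_block_mat (B 0 0) (B 0 1) (B 1 0) (B 1 1)"

definition aux_mult ::
    "(nat \<Rightarrow> nat \<Rightarrow> 'a :: semiring_0 mat) \<Rightarrow> (nat \<Rightarrow> nat \<Rightarrow> 'a mat) \<Rightarrow> nat \<Rightarrow> nat \<Rightarrow> 'a mat" where
  "aux_mult B C \<alpha> \<beta> = B \<alpha> 0 * C 0 \<beta> + B \<alpha> 1 * C 1 \<beta>"

definition aux_one :: "nat \<Rightarrow> nat \<Rightarrow> nat \<Rightarrow> 'a :: {zero, one} mat" where
  "aux_one d \<alpha> \<beta> = (if \<alpha> = \<beta> then 1\<^sub>m d else 0\<^sub>m d d)"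

lemma aux_blocks_cong:
  "(\<And>\<alpha> \<beta>. \<alpha> < 2 \<Longrightarrow> \<beta> < 2 \<Longrightarrow> B \<alpha> \<beta> = C \<alpha> \<beta>) \<Longrightarrow> aux_blocks B = aux_blocks C"
  by (simp add: aux_blocks_def)

lemma aux_blocks_carrier_mat:
  "(\<And>\<alpha> \<beta>. B \<alpha> \<beta> \<in> carrier_mat N N') \<Longrightarrow> aux_blocks B \<in> carrier_mat (N + N) (N' + N')"
  by (simp add: aux_blocks_def)

lemma aux_mult_carrier_mat:
  "(\<And>\<alpha> \<beta>. B \<alpha> \<beta> \<in> carrier_mat N N) \<Longrightarrow> (\<And>\<alpha> \<beta>. C \<alpha> \<beta> \<in> carrier_mat N N) \<Longrightarrow>
   aux_mult B C \<alpha> \<beta> \<in> carrier_mat N N"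
  unfolding aux_mult_def by (meson add_carrier_mat mult_carrier_mat)

lemma index_aux_blocks:
  assumes B: "\<And>\<alpha> \<beta>. B \<alpha> \<beta> \<in> carrier_mat N N'" and i: "i < N + N" and j: "j < N' + N'"
  shows "aux_blocks B $$ (i, j) = B (i div N) (j div N') $$ (i mod N, j mod N')"
proof -
  have dims: "\<And>\<alpha> \<beta>. dim_row (B \<alpha> \<beta>) = N" "\<And>\<alpha> \<beta>. dim_col (B \<alpha> \<beta>) = N'"
    using B by auto
  have "N > 0" "N' > 0" using i j by auto
  then have "i div N = (if i < N then 0 else 1)" "i mod N = (if i < N then i else i - N)"
    "j div N' = (if j < N' then 0 else 1)" "j mod N' = (if j < N' then j else j - N')"
    using i j by (simp_all add: div_if mod_if less_diff_conv2)
  then show ?thesis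
    using i j by (simp add: aux_blocks_def dims)
qed

lemma aux_blocks_add:
  assumes "\<And>\<alpha> \<beta>. B \<alpha> \<beta> \<in> carrier_mat N N'" and "\<And>\<alpha> \<beta>. C \<alpha> \<beta> \<in> carrier_mat N N'"
  shows "aux_blocks B + aux_blocks C = aux_blocks (\<lambda>\<alpha> \<beta>. B \<alpha> \<beta> + C \<alpha> \<beta>)"
  unfolding aux_blocks_def by (rule add_four_block_mat[of _ N N' _ N' _ N]) (use assms in blast)+

lemma aux_blocks_mult:
  assumes "\<And>\<alpha> \<beta>. B \<alpha> \<beta> \<in> carrier_mat N N" and "\<And>\<alpha> \<beta>. C \<alpha> \<beta> \<in> carrier_mat N N"
  shows "aux_blocks B * aux_blocks C = aux_blocks (aux_mult B C)"
  unfolding aux_blocks_def aux_mult_def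
  by (rule mult_four_block_mat[of _ N N _ N _ N _ _ N _ N])
    (use assms in blast)+

lemma trace_a_aux_blocks:
  assumes "B 0 0 \<in> carrier_mat N N" and "B 1 1 \<in> carrier_mat N N"
  shows "trace_a N (aux_blocks B) = B 0 0 + B 1 1"
  using assms by (intro eq_matI) (auto simp: trace_a_def aux_blocks_def)

lemma unit2_carrier_mat [simp]: "unit2 \<alpha> \<beta> \<in> carrier_mat 2 2"
  by (simp add: unit2_def)

lemma index_unit2 [simp]: "i < 2 \<Longrightarrow> j < 2 \<Longrightarrow> unit2 \<alpha> \<beta> $$ (i, j) = (if i = \<alpha> \<and> j = \<beta> then 1 else 0)"
  by (simp add: unit2_def)

lemma kron_eq_aux_blocks:
  assumes G: "G \<in> carrier_mat 2 2" and Q: "Q \<in> carrier_mat N N'"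
  shows "kron G Q = aux_blocks (\<lambda>\<alpha> \<beta>. G $$ (\<alpha>, \<beta>) \<cdot>\<^sub>m Q)"
proof -
  have blocks: "aux_blocks (\<lambda>\<alpha> \<beta>. G $$ (\<alpha>, \<beta>) \<cdot>\<^sub>m Q) \<in> carrier_mat (N + N) (N' + N')"
    using Q by (intro aux_blocks_carrier_mat) simp
  show ?thesis
  proof (rule eq_matI)
    fix i j assume "i < dim_row (aux_blocks (\<lambda>\<alpha> \<beta>. G $$ (\<alpha>, \<beta>) \<cdot>\<^sub>m Q))"
      and "j < dim_col (aux_blocks (\<lambda>\<alpha> \<beta>. G $$ (\<alpha>, \<beta>) \<cdot>\<^sub>m Q))"
    then have i: "i < 2 * N" and j: "j < 2 * N'" using blocks by auto
    then have "i < N + N" "j < N' + N'" by simp_all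
    with Q have "aux_blocks (\<lambda>\<alpha> \<beta>. G $$ (\<alpha>, \<beta>) \<cdot>\<^sub>m Q) $$ (i, j)
        = G $$ (i div N, j div N') * Q $$ (i mod N, j mod N')"
      using div_mod_less_mult[OF i] div_mod_less_mult[OF j] by (subst index_aux_blocks) auto
    then show "kron G Q $$ (i, j) = aux_blocks (\<lambda>\<alpha> \<beta>. G $$ (\<alpha>, \<beta>) \<cdot>\<^sub>m Q) $$ (i, j)"
      using i j G Q by simp
  qed (use G Q blocks in auto)
qed

lemma sum_kron_unit2:
  assumes P: "\<And>\<alpha> \<beta>. P \<alpha> \<beta> \<in> carrier_mat N N'"
  shows "kron (unit2 0 0) (P 0 0) + kron (unit2 0 1) (P 0 1) + kron (unit2 1 0) (P 1 0)
    + kron (unit2 1 1) (P 1 1) = aux_blocks P"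
proof -
  have "kron (unit2 0 0) (P 0 0) + kron (unit2 0 1) (P 0 1) + kron (unit2 1 0) (P 1 0)
    + kron (unit2 1 1) (P 1 1) = aux_blocks (\<lambda>\<alpha> \<beta>.
      unit2 0 0 $$ (\<alpha>, \<beta>) \<cdot>\<^sub>m P 0 0 + unit2 0 1 $$ (\<alpha>, \<beta>) \<cdot>\<^sub>m P 0 1
      + unit2 1 0 $$ (\<alpha>, \<beta>) \<cdot>\<^sub>m P 1 0 + unit2 1 1 $$ (\<alpha>, \<beta>) \<cdot>\<^sub>m P 1 1)"
    using P by (simp add: kron_eq_aux_blocks[OF unit2_carrier_mat P] aux_blocks_add[of _ N N'])
  also have "\<dots> = aux_blocks P"
  proof (rule aux_blocks_cong)
    fix \<alpha> \<beta> :: nat assume "\<alpha> < 2" "\<beta> < 2"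
    moreover have "dim_row (P a b) = N" "dim_col (P a b) = N'" for a b using P by auto
    ultimately show "unit2 0 0 $$ (\<alpha>, \<beta>) \<cdot>\<^sub>m P 0 0 + unit2 0 1 $$ (\<alpha>, \<beta>) \<cdot>\<^sub>m P 0 1
      + unit2 1 0 $$ (\<alpha>, \<beta>) \<cdot>\<^sub>m P 1 0 + unit2 1 1 $$ (\<alpha>, \<beta>) \<cdot>\<^sub>m P 1 1 = P \<alpha> \<beta>"
      by (intro eq_matI) (auto simp: less_2_cases_iff)
  qed
  finally show ?thesis .
qed

lemma on_a1_aux_blocks:
  assumes "\<And>\<alpha> \<beta>. L \<alpha> \<beta> \<in> carrier_mat d d"
  shows "on_a1 d e L = aux_blocks (\<lambda>\<alpha> \<beta>. kron (L \<alpha> \<beta>) (1\<^sub>m e))"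
  unfolding on_a1_def kron_assoc by (rule sum_kron_unit2[of _ "d * e" "d * e"]) (use assms in simp)

lemma on_a2_aux_blocks:
  assumes "\<And>\<alpha> \<beta>. X \<alpha> \<beta> \<in> carrier_mat e e"
  shows "on_a2 d e X = aux_blocks (\<lambda>\<alpha> \<beta>. kron (1\<^sub>m d) (X \<alpha> \<beta>))"
  unfolding on_a2_def kron_assoc by (rule sum_kron_unit2[of _ "d * e" "d * e"]) (use assms in simp)

lemma on_a1_cong:
  "(\<And>\<alpha> \<beta>. \<alpha> < 2 \<Longrightarrow> \<beta> < 2 \<Longrightarrow> X \<alpha> \<beta> = Y \<alpha> \<beta>) \<Longrightarrow> on_a1 d e X = on_a1 d e Y"
  by (simp add: on_a1_def)

lemma on_a1_carrier_mat:
  "(\<And>\<alpha> \<beta>. L \<alpha> \<beta> \<in> carrier_mat d d) \<Longrightarrow> on_a1 d e L \<in> carrier_mat (d * e + d * e) (d * e + d * e)"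
  by (simp add: on_a1_aux_blocks aux_blocks_carrier_mat)

lemma on_a2_carrier_mat:
  "(\<And>\<alpha> \<beta>. X \<alpha> \<beta> \<in> carrier_mat e e) \<Longrightarrow> on_a2 d e X \<in> carrier_mat (d * e + d * e) (d * e + d * e)"
  by (simp add: on_a2_aux_blocks aux_blocks_carrier_mat)

definition M_diag :: "complex \<Rightarrow> nat \<Rightarrow> complex" where
  "M_diag s \<alpha> = (if \<alpha> = 0 then s^2 else inverse (s^2))"

lemma M_a_aux_blocks:
  "M_a s d e = aux_blocks (\<lambda>\<alpha> \<beta>. if \<alpha> = \<beta> then M_diag s \<alpha> \<cdot>\<^sub>m 1\<^sub>m (d * e) else 0\<^sub>m (d * e) (d * e))"
  unfolding M_a_def kron_assoc kron_one
  by (subst kron_eq_aux_blocks[of _ _ "d * e" "d * e"])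
    (auto intro!: aux_blocks_cong eq_matI simp: M_diag_def less_2_cases_iff)

lemma M_a_carrier_mat: "M_a s d e \<in> carrier_mat (d * e + d * e) (d * e + d * e)"
  unfolding M_a_aux_blocks by (rule aux_blocks_carrier_mat) simp

lemma on_a1_mult:
  assumes L: "\<And>\<alpha> \<beta>. L \<alpha> \<beta> \<in> carrier_mat d d" and R: "\<And>\<alpha> \<beta>. R \<alpha> \<beta> \<in> carrier_mat d d"
  shows "on_a1 d e L * on_a1 d e R = on_a1 d e (aux_mult L R)"
proof -
  have "aux_mult (\<lambda>\<alpha> \<beta>. kron (L \<alpha> \<beta>) (1\<^sub>m e)) (\<lambda>\<alpha> \<beta>. kron (R \<alpha> \<beta>) (1\<^sub>m e))
      = (\<lambda>\<alpha> \<beta>. kron (aux_mult L R \<alpha> \<beta>) (1\<^sub>m e))"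
    using L R mult_carrier_mat[OF L R]
    by (intro ext) (simp add: kron_mult[of _ d d _ e e _ d _ e] kron_add_left[of _ d d] aux_mult_def)
  then show ?thesis
    using L R aux_mult_carrier_mat[OF L R]
    by (simp add: on_a1_aux_blocks aux_blocks_mult[of _ "d * e"])
qed

lemma on_a2_mult:
  assumes X: "\<And>\<alpha> \<beta>. X \<alpha> \<beta> \<in> carrier_mat e e" and Y: "\<And>\<alpha> \<beta>. Y \<alpha> \<beta> \<in> carrier_mat e e"
  shows "on_a2 d e X * on_a2 d e Y = on_a2 d e (aux_mult X Y)"
proof -
  have "aux_mult (\<lambda>\<alpha> \<beta>. kron (1\<^sub>m d) (X \<alpha> \<beta>)) (\<lambda>\<alpha> \<beta>. kron (1\<^sub>m d) (Y \<alpha> \<beta>))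
      = (\<lambda>\<alpha> \<beta>. kron (1\<^sub>m d) (aux_mult X Y \<alpha> \<beta>))"
    using X Y mult_carrier_mat[OF X Y]
    by (intro ext) (simp add: kron_mult[of _ d d _ e e _ d _ e] kron_add_right[of _ e e] aux_mult_def)
  then show ?thesis
    using X Y aux_mult_carrier_mat[OF X Y]
    by (simp add: on_a2_aux_blocks aux_blocks_mult[of _ "d * e"])
qed

lemma on_a1_aux_one: "on_a1 d e (aux_one d) = 1\<^sub>m (d * e + d * e)"
  by (simp add: on_a1_aux_blocks aux_one_def aux_blocks_def kron_one kron_zero_left)

lemma inverts_mat_on_a1:
  assumes L: "\<And>\<alpha> \<beta>. L \<alpha> \<beta> \<in> carrier_mat d d" and R: "\<And>\<alpha> \<beta>. R \<alpha> \<beta> \<in> carrier_mat d d"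
    and inverse: "\<And>\<alpha> \<beta>. \<alpha> < 2 \<Longrightarrow> \<beta> < 2 \<Longrightarrow> aux_mult L R \<alpha> \<beta> = aux_one d \<alpha> \<beta>"
  shows "inverts_mat (on_a1 d e L) (on_a1 d e R)"
proof -
  have "on_a1 d e L * on_a1 d e R = on_a1 d e (aux_one d)"
    using inverse by (simp add: on_a1_mult[OF L R] cong: on_a1_cong)
  moreover have "on_a1 d e L \<in> carrier_mat (d * e + d * e) (d * e + d * e)"
    by (rule on_a1_carrier_mat) (rule L)
  ultimately show ?thesis
    by (simp add: inverts_mat_def on_a1_aux_one)
qed

lemma on_a1_mult_M_a:
  assumes R: "\<And>\<alpha> \<beta>. R \<alpha> \<beta> \<in> carrier_mat d d"
  shows "on_a1 d e R * M_a s d e = on_a1 d e (\<lambda>\<alpha> \<beta>. M_diag s \<beta> \<cdot>\<^sub>m R \<alpha> \<beta>)"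
proof -
  have K: "kron (R \<alpha> \<beta>) (1\<^sub>m e) \<in> carrier_mat (d * e) (d * e)" for \<alpha> \<beta>
    using R by simp
  have "aux_mult (\<lambda>\<alpha> \<beta>. kron (R \<alpha> \<beta>) (1\<^sub>m e))
      (\<lambda>\<alpha> \<beta>. if \<alpha> = \<beta> then M_diag s \<alpha> \<cdot>\<^sub>m 1\<^sub>m (d * e) else 0\<^sub>m (d * e) (d * e)) \<alpha> \<beta>
    = kron (M_diag s \<beta> \<cdot>\<^sub>m R \<alpha> \<beta>) (1\<^sub>m e)" if "\<beta> < 2" for \<alpha> \<beta>
    using that K by (auto simp: aux_mult_def less_2_cases_iff kron_smult_left
        mult_smult_distrib[OF K one_carrier_mat] right_mult_zero_mat[OF K] right_mult_one_mat[OF K])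
  then show ?thesis
    using R
    by (simp add: on_a1_aux_blocks M_a_aux_blocks aux_blocks_mult[of _ "d * e"] cong: aux_blocks_cong)
qed

lemma on_a1_on_a2_on_a2_on_a1_M_a:
  assumes L: "\<And>\<alpha> \<beta>. L \<alpha> \<beta> \<in> carrier_mat d d" and R: "\<And>\<alpha> \<beta>. R \<alpha> \<beta> \<in> carrier_mat d d"
    and P: "\<And>\<alpha> \<beta>. P \<alpha> \<beta> \<in> carrier_mat e e" and Q: "\<And>\<alpha> \<beta>. Q \<alpha> \<beta> \<in> carrier_mat e e"
  shows "on_a1 d e L * on_a2 d e P * on_a2 d e Q * on_a1 d e R * M_a s d e
    = on_a1 d e L * on_a2 d e (aux_mult P Q) * on_a1 d e (\<lambda>\<alpha> \<beta>. M_diag s \<beta> \<cdot>\<^sub>m R \<alpha> \<beta>)"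
proof -
  note c = on_a1_carrier_mat[OF L] on_a2_carrier_mat[OF P] on_a2_carrier_mat[OF Q]
    on_a1_carrier_mat[OF R] M_a_carrier_mat
  then have "on_a1 d e L * on_a2 d e P * on_a2 d e Q * on_a1 d e R * M_a s d e
      = on_a1 d e L * (on_a2 d e P * on_a2 d e Q) * (on_a1 d e R * M_a s d e)"
    by (simp add: assoc_mult_mat[OF c(1-3)]
        assoc_mult_mat[OF mult_carrier_mat[OF c(1) mult_carrier_mat[OF c(2,3)]] c(4,5)])
  then show ?thesis
    by (simp add: on_a2_mult[OF P Q] on_a1_mult_M_a[OF R])
qed

lemma on_a1_on_a2_on_a1_aux_blocks:
  assumes L: "\<And>\<alpha> \<beta>. L \<alpha> \<beta> \<in> carrier_mat d d" and R: "\<And>\<alpha> \<beta>. R \<alpha> \<beta> \<in> carrier_mat d d"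
    and X: "\<And>\<alpha> \<beta>. X \<alpha> \<beta> \<in> carrier_mat e e"
  shows "on_a1 d e L * on_a2 d e X * on_a1 d e R = aux_blocks (\<lambda>\<alpha> \<delta>.
      (kron (L \<alpha> 0 * R 0 \<delta>) (X 0 0) + kron (L \<alpha> 1 * R 0 \<delta>) (X 1 0))
    + (kron (L \<alpha> 0 * R 1 \<delta>) (X 0 1) + kron (L \<alpha> 1 * R 1 \<delta>) (X 1 1)))"
proof -
  have K: "kron (L \<alpha> \<beta>) (X \<gamma> \<delta>) \<in> carrier_mat (d * e) (d * e)" for \<alpha> \<beta> \<gamma> \<delta>
    using L X by simp
  have KR: "kron (L \<alpha> \<beta>) (X \<beta> \<gamma>) * kron (R \<gamma> \<delta>) (1\<^sub>m e) = kron (L \<alpha> \<beta> * R \<gamma> \<delta>) (X \<beta> \<gamma>)"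
    for \<alpha> \<beta> \<gamma> \<delta>
    using L R X by (simp add: kron_mult[of _ d d _ e e _ d _ e] right_mult_one_mat[OF X])
  define LX where "LX \<alpha> \<gamma> = kron (L \<alpha> 0) (X 0 \<gamma>) + kron (L \<alpha> 1) (X 1 \<gamma>)" for \<alpha> \<gamma>
  have LX_carrier: "LX \<alpha> \<gamma> \<in> carrier_mat (d * e) (d * e)" for \<alpha> \<gamma>
    using K by (simp add: LX_def)
  have "aux_mult (\<lambda>\<alpha> \<beta>. kron (L \<alpha> \<beta>) (1\<^sub>m e)) (\<lambda>\<alpha> \<beta>. kron (1\<^sub>m d) (X \<alpha> \<beta>)) = LX"
    using L X by (intro ext) (simp add: aux_mult_def LX_def kron_mult[of _ d d _ e e _ d _ e]
        right_mult_one_mat[OF L] left_mult_one_mat[OF X])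
  then have "on_a1 d e L * on_a2 d e X = aux_blocks LX"
    using L X by (simp add: on_a1_aux_blocks on_a2_aux_blocks aux_blocks_mult[of _ "d * e"])
  moreover have "aux_mult LX (\<lambda>\<alpha> \<beta>. kron (R \<alpha> \<beta>) (1\<^sub>m e)) = (\<lambda>\<alpha> \<delta>.
      (kron (L \<alpha> 0 * R 0 \<delta>) (X 0 0) + kron (L \<alpha> 1 * R 0 \<delta>) (X 1 0))
    + (kron (L \<alpha> 0 * R 1 \<delta>) (X 0 1) + kron (L \<alpha> 1 * R 1 \<delta>) (X 1 1)))"
    using K R by (intro ext)
      (simp add: aux_mult_def LX_def KR add_mult_distrib_mat[of _ "d * e" "d * e" _ _ "d * e"])
  ultimately show ?thesis
    using R LX_carrier by (simp add: on_a1_aux_blocks aux_blocks_mult[of _ "d * e"])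
qed

text \<open>\<open>sandwich_trace L R \<beta> \<gamma>\<close> is the partial trace \<open>Tr\<^sub>a (L E\<^sub>\<beta>\<^sub>\<gamma> R)\<close> for the matrix unit
  \<open>E\<^sub>\<beta>\<^sub>\<gamma>\<close>, with the (non-commuting) entries of \<open>L\<close> and \<open>R\<close> kept in this order.\<close>

definition sandwich_trace ::
    "(nat \<Rightarrow> nat \<Rightarrow> 'a :: semiring_0 mat) \<Rightarrow> (nat \<Rightarrow> nat \<Rightarrow> 'a mat) \<Rightarrow> nat \<Rightarrow> nat \<Rightarrow> 'a mat" where
  "sandwich_trace L R \<beta> \<gamma> = L 0 \<beta> * R \<gamma> 0 + L 1 \<beta> * R \<gamma> 1"

lemma trace_a_on_a1_on_a2_on_a1:
  assumes L: "\<And>\<alpha> \<beta>. L \<alpha> \<beta> \<in> carrier_mat d d" and R: "\<And>\<alpha> \<beta>. R \<alpha> \<beta> \<in> carrier_mat d d"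
    and X: "\<And>\<alpha> \<beta>. X \<alpha> \<beta> \<in> carrier_mat e e"
  shows "trace_a (d * e) (on_a1 d e L * on_a2 d e X * on_a1 d e R)
    = kron (sandwich_trace L R 0 0) (X 0 0) + kron (sandwich_trace L R 0 1) (X 0 1)
      + kron (sandwich_trace L R 1 0) (X 1 0) + kron (sandwich_trace L R 1 1) (X 1 1)"
    (is "_ = ?rhs")
proof -
  have dims: "dim_row (L \<alpha> \<beta>) = d" "dim_col (R \<alpha> \<beta>) = d" "dim_row (X \<alpha> \<beta>) = e"
    "dim_col (X \<alpha> \<beta>) = e" for \<alpha> \<beta>
    using carrier_matD[OF L] carrier_matD[OF R] carrier_matD[OF X] by auto
  have "(kron (L 0 0 * R 0 0) (X 0 0) + kron (L 0 1 * R 0 0) (X 1 0))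
      + (kron (L 0 0 * R 1 0) (X 0 1) + kron (L 0 1 * R 1 0) (X 1 1))
    + ((kron (L 1 0 * R 0 1) (X 0 0) + kron (L 1 1 * R 0 1) (X 1 0))
      + (kron (L 1 0 * R 1 1) (X 0 1) + kron (L 1 1 * R 1 1) (X 1 1))) = ?rhs"
  proof (rule eq_matI)
    fix i j assume "i < dim_row ?rhs" and "j < dim_col ?rhs"
    then have i: "i < d * e" and j: "j < d * e"
      by (simp_all add: sandwich_trace_def dims)
    then show "(kron (L 0 0 * R 0 0) (X 0 0) + kron (L 0 1 * R 0 0) (X 1 0)
        + (kron (L 0 0 * R 1 0) (X 0 1) + kron (L 0 1 * R 1 0) (X 1 1))
      + (kron (L 1 0 * R 0 1) (X 0 0) + kron (L 1 1 * R 0 1) (X 1 0)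
        + (kron (L 1 0 * R 1 1) (X 0 1) + kron (L 1 1 * R 1 1) (X 1 1)))) $$ (i, j) = ?rhs $$ (i, j)"
      using div_mod_less_mult[OF i] div_mod_less_mult[OF j]
      by (simp add: sandwich_trace_def dims algebra_simps del: index_mult_mat(1))
  qed (simp_all add: sandwich_trace_def dims)
  moreover have "L \<alpha> \<beta> * R \<gamma> \<delta> \<in> carrier_mat d d" for \<alpha> \<beta> \<gamma> \<delta>
    using L R by (rule mult_carrier_mat)
  ultimately show ?thesis
    using X by (simp add: on_a1_on_a2_on_a1_aux_blocks[OF L R X] trace_a_aux_blocks[of _ "d * e"])
qed

lemma trace_a_on_a1_on_a2_on_a1_diagonal:
  assumes L: "\<And>\<alpha> \<beta>. L \<alpha> \<beta> \<in> carrier_mat d d" and R: "\<And>\<alpha> \<beta>. R \<alpha> \<beta> \<in> carrier_mat d d"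
    and X: "\<And>\<alpha> \<beta>. X \<alpha> \<beta> \<in> carrier_mat e e"
    and diagonal: "\<And>\<beta> \<gamma>. \<beta> < 2 \<Longrightarrow> \<gamma> < 2 \<Longrightarrow>
      sandwich_trace L R \<beta> \<gamma> = (if \<beta> = \<gamma> then w \<beta> \<cdot>\<^sub>m 1\<^sub>m d else 0\<^sub>m d d)"
  shows "trace_a (d * e) (on_a1 d e L * on_a2 d e X * on_a1 d e R)
    = kron (1\<^sub>m d) (w 0 \<cdot>\<^sub>m X 0 0 + w 1 \<cdot>\<^sub>m X 1 1)"
proof -
  have dims: "dim_row (X \<alpha> \<beta>) = e" "dim_col (X \<alpha> \<beta>) = e" for \<alpha> \<beta>
    using carrier_matD[OF X] by auto
  have "kron (w 0 \<cdot>\<^sub>m 1\<^sub>m d) (X 0 0) + kron (0\<^sub>m d d) (X 0 1) + kron (0\<^sub>m d d) (X 1 0)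
      + kron (w 1 \<cdot>\<^sub>m 1\<^sub>m d) (X 1 1) = kron (1\<^sub>m d) (w 0 \<cdot>\<^sub>m X 0 0 + w 1 \<cdot>\<^sub>m X 1 1)"
  proof (rule eq_matI)
    fix i j assume "i < dim_row (kron (1\<^sub>m d) (w 0 \<cdot>\<^sub>m X 0 0 + w 1 \<cdot>\<^sub>m X 1 1))"
      and "j < dim_col (kron (1\<^sub>m d) (w 0 \<cdot>\<^sub>m X 0 0 + w 1 \<cdot>\<^sub>m X 1 1))"
    then have i: "i < d * e" and j: "j < d * e" by (simp_all add: dims)
    show "(kron (w 0 \<cdot>\<^sub>m 1\<^sub>m d) (X 0 0) + kron (0\<^sub>m d d) (X 0 1) + kron (0\<^sub>m d d) (X 1 0)
      + kron (w 1 \<cdot>\<^sub>m 1\<^sub>m d) (X 1 1)) $$ (i, j) = kron (1\<^sub>m d) (w 0 \<cdot>\<^sub>m X 0 0 + w 1 \<cdot>\<^sub>m X 1 1) $$ (i, j)"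
      using i j div_mod_less_mult[OF i] div_mod_less_mult[OF j] by (simp add: dims algebra_simps)
  qed (simp_all add: dims)
  then show ?thesis
    using L R X diagonal by (simp add: trace_a_on_a1_on_a2_on_a1)
qed

section \<open>The spin representations and the matrix \<open>L\<^sup>+\<close>\<close>

lemma spin_qH_carrier_mat [simp]: "spin_qH s n a b \<in> carrier_mat (Suc n) (Suc n)"
  by (simp add: spin_qH_def)

lemma spin_F_carrier_mat [simp]: "spin_F s n \<in> carrier_mat (Suc n) (Suc n)"
  by (simp add: spin_F_def)

lemma spin_E_carrier_mat [simp]: "spin_E n \<in> carrier_mat (Suc n) (Suc n)"
  by (simp add: spin_E_def)

lemma dim_spin [simp]:
  "dim_row (spin_qH s n a b) = Suc n" "dim_col (spin_qH s n a b) = Suc n"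
  "dim_row (spin_F s n) = Suc n" "dim_col (spin_F s n) = Suc n"
  "dim_row (spin_E n) = Suc n" "dim_col (spin_E n) = Suc n"
  by (simp_all add: spin_qH_def spin_F_def spin_E_def)

lemma index_spin_qH [simp]:
  "i < Suc n \<Longrightarrow> j < Suc n \<Longrightarrow>
   spin_qH s n a b $$ (i, j) = (if i = j then s powi (a * (2 * int i - int n) + 2 * b) else 0)"
  by (simp add: spin_qH_def)

lemma index_spin_F [simp]:
  "i < Suc n \<Longrightarrow> j < Suc n \<Longrightarrow>
   spin_F s n $$ (i, j) = (if j = i + 1 then qint s (int j) * qint s (int n - int j + 1) else 0)"
  by (simp add: spin_F_def)

lemma index_spin_qH_mult:
  assumes "dim_row A = Suc n" and "i < Suc n" and "j < dim_col A"
  shows "(spin_qH s n a b * A) $$ (i, j) = s powi (a * (2 * int i - int n) + 2 * b) * A $$ (i, j)"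
  using assms by (simp add: spin_qH_def scalar_prod_def if_distrib[of "\<lambda>x. x * _"] sum.delta cong: if_cong)

lemma index_mult_spin_qH:
  assumes "dim_col A = Suc n" and "i < dim_row A" and "j < Suc n"
  shows "(A * spin_qH s n a b) $$ (i, j) = A $$ (i, j) * s powi (a * (2 * int j - int n) + 2 * b)"
  using assms by (simp add: spin_qH_def scalar_prod_def if_distrib[of "\<lambda>x. _ * x"] sum.delta' cong: if_cong)

lemma spin_qH_mult:
  assumes "s \<noteq> 0"
  shows "spin_qH s n a b * spin_qH s n a' b' = spin_qH s n (a + a') (b + b')"
  using assms
  by (intro eq_matI)
    (simp_all add: index_spin_qH_mult power_int_add[symmetric] algebra_simps del: index_mult_mat(1))

lemma spin_qH_inverse:
  assumes "s \<noteq> 0"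
  shows "spin_qH s n a 0 * spin_qH s n (- a) 0 = 1\<^sub>m (Suc n)"
  using spin_qH_mult[OF assms, of n a 0 "- a" 0] by (auto intro!: eq_matI)

lemma spin_qH_shift:
  assumes "s \<noteq> 0"
  shows "spin_qH s n a b = s powi (2 * b) \<cdot>\<^sub>m spin_qH s n a 0"
  using assms by (intro eq_matI) (auto simp: power_int_add)

lemma spin_F_mult_spin_qH:
  assumes "s \<noteq> 0"
  shows "spin_F s n * spin_qH s n a 0 = s powi (2 * a) \<cdot>\<^sub>m (spin_qH s n a 0 * spin_F s n)"
proof (rule eq_matI)
  fix i j assume "i < dim_row (s powi (2 * a) \<cdot>\<^sub>m (spin_qH s n a 0 * spin_F s n))"
    and "j < dim_col (s powi (2 * a) \<cdot>\<^sub>m (spin_qH s n a 0 * spin_F s n))"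
  then have i: "i < Suc n" and j: "j < Suc n" by simp_all
  have "s powi (a * (2 * int j - int n)) = s powi (2 * a) * s powi (a * (2 * int i - int n))"
    if "j = i + 1"
    using assms that by (simp add: power_int_add[symmetric] algebra_simps)
  then show "(spin_F s n * spin_qH s n a 0) $$ (i, j)
      = (s powi (2 * a) \<cdot>\<^sub>m (spin_qH s n a 0 * spin_F s n)) $$ (i, j)"
    using i j by (auto simp: index_spin_qH_mult index_mult_spin_qH simp del: index_mult_mat(1))
qed simp_all

lemma L_plus_carrier_mat [simp]: "L_plus s n \<alpha> \<beta> \<in> carrier_mat (Suc n) (Suc n)"
  by (simp add: L_plus_def)

lemma L_minus_carrier_mat [simp]: "L_minus s n \<alpha> \<beta> \<in> carrier_mat (Suc n) (Suc n)"
  by (simp add: L_minus_def)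

definition L_plus_inv :: "complex \<Rightarrow> nat \<Rightarrow> nat \<Rightarrow> nat \<Rightarrow> complex mat" where
  "L_plus_inv s n \<alpha> \<beta> =
     (if \<alpha> = 0 \<and> \<beta> = 0 then spin_qH s n (-1) 0
      else if \<alpha> = 0 \<and> \<beta> = 1 then (- s * (s^2 - inverse (s^2))) \<cdot>\<^sub>m spin_F s n
      else if \<alpha> = 1 \<and> \<beta> = 0 then 0\<^sub>m (n+1) (n+1)
      else spin_qH s n 1 0)"

lemma L_plus_inv_carrier_mat [simp]: "L_plus_inv s n \<alpha> \<beta> \<in> carrier_mat (Suc n) (Suc n)"
  by (simp add: L_plus_inv_def)

lemma smult_smult_mat: "x \<cdot>\<^sub>m (y \<cdot>\<^sub>m A) = (x * y :: 'a :: semigroup_mult) \<cdot>\<^sub>m A"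
  by (intro eq_matI) (simp_all add: mult.assoc)

lemma smult_mat_cancel:
  fixes A :: "complex mat"
  assumes "x + y = 0"
  shows "x \<cdot>\<^sub>m A + y \<cdot>\<^sub>m A = 0\<^sub>m (dim_row A) (dim_col A)"
  using assms by (intro eq_matI) (simp_all add: distrib_right[symmetric])

lemma L_plus_inverse:
  assumes "s \<noteq> 0" and "\<alpha> < 2" and "\<beta> < 2"
  shows "aux_mult (L_plus s n) (L_plus_inv s n) \<alpha> \<beta> = aux_one (Suc n) \<alpha> \<beta>"
    and "aux_mult (L_plus_inv s n) (L_plus s n) \<alpha> \<beta> = aux_one (Suc n) \<alpha> \<beta>"
proof -
  let ?K = "spin_qH s n 1 0" and ?K' = "spin_qH s n (-1) 0" and ?F = "spin_F s n"
  let ?c = "(s^2 - inverse (s^2)) / s" and ?k = "- s * (s^2 - inverse (s^2))"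
  have KK: "?K * ?K' = 1\<^sub>m (Suc n)" "?K' * ?K = 1\<^sub>m (Suc n)"
    using spin_qH_inverse[OF assms(1), of n 1] spin_qH_inverse[OF assms(1), of n "-1"] by simp_all
  have "?K * (?k \<cdot>\<^sub>m ?F) + (?c \<cdot>\<^sub>m ?F) * ?K = ?k \<cdot>\<^sub>m (?K * ?F) + (?c * s^2) \<cdot>\<^sub>m (?K * ?F)"
    using spin_F_mult_spin_qH[OF assms(1), of n 1]
    by (simp add: mult_smult_distrib[of _ "Suc n" "Suc n" _ "Suc n"]
        mult_smult_assoc_mat[of _ "Suc n" "Suc n" _ "Suc n"]
        smult_smult_mat)
  also have "\<dots> = 0\<^sub>m (Suc n) (Suc n)"
    using assms(1) by (subst smult_mat_cancel) (simp_all add: field_simps power2_eq_square)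
  finally have upper_right: "?K * (?k \<cdot>\<^sub>m ?F) + (?c \<cdot>\<^sub>m ?F) * ?K = 0\<^sub>m (Suc n) (Suc n)" .
  have "?K' * (?c \<cdot>\<^sub>m ?F) + (?k \<cdot>\<^sub>m ?F) * ?K' = ?c \<cdot>\<^sub>m (?K' * ?F) + (?k * inverse (s^2)) \<cdot>\<^sub>m (?K' * ?F)"
    using spin_F_mult_spin_qH[OF assms(1), of n "-1"]
    by (simp add: mult_smult_distrib[of _ "Suc n" "Suc n" _ "Suc n"]
        mult_smult_assoc_mat[of _ "Suc n" "Suc n" _ "Suc n"]
        power_int_minus smult_smult_mat)
  also have "\<dots> = 0\<^sub>m (Suc n) (Suc n)"
    using assms(1) by (subst smult_mat_cancel) (simp_all add: field_simps power2_eq_square)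
  finally have upper_right': "?K' * (?c \<cdot>\<^sub>m ?F) + (?k \<cdot>\<^sub>m ?F) * ?K' = 0\<^sub>m (Suc n) (Suc n)" .
  show "aux_mult (L_plus s n) (L_plus_inv s n) \<alpha> \<beta> = aux_one (Suc n) \<alpha> \<beta>"
    "aux_mult (L_plus_inv s n) (L_plus s n) \<alpha> \<beta> = aux_one (Suc n) \<alpha> \<beta>"
    using assms(2,3) KK upper_right upper_right'
    by (auto simp: less_2_cases_iff aux_mult_def aux_one_def L_plus_def L_plus_inv_def)
qed

lemma sandwich_trace_L_plus:
  assumes "s \<noteq> 0" and "\<beta> < 2" and "\<gamma> < 2"
  shows "sandwich_trace (L_plus s n) (\<lambda>\<alpha> \<delta>. M_diag s \<delta> \<cdot>\<^sub>m L_plus_inv s n \<alpha> \<delta>) \<beta> \<gamma>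
    = (if \<beta> = \<gamma> then M_diag s \<beta> \<cdot>\<^sub>m 1\<^sub>m (Suc n) else 0\<^sub>m (Suc n) (Suc n))"
proof -
  let ?K = "spin_qH s n 1 0" and ?K' = "spin_qH s n (-1) 0" and ?F = "spin_F s n"
  let ?c = "(s^2 - inverse (s^2)) / s" and ?k = "- s * (s^2 - inverse (s^2))"
  have KK: "?K * ?K' = 1\<^sub>m (Suc n)" "?K' * ?K = 1\<^sub>m (Suc n)"
    using spin_qH_inverse[OF assms(1), of n 1] spin_qH_inverse[OF assms(1), of n "-1"] by simp_all
  have "(?c \<cdot>\<^sub>m ?F) * (s^2 \<cdot>\<^sub>m ?K') + ?K' * (inverse (s^2) \<cdot>\<^sub>m (?k \<cdot>\<^sub>m ?F))
      = (?c * s^2 * inverse (s^2)) \<cdot>\<^sub>m (?K' * ?F) + (inverse (s^2) * ?k) \<cdot>\<^sub>m (?K' * ?F)"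
    using spin_F_mult_spin_qH[OF assms(1), of n "-1"]
    by (simp add: mult_smult_distrib[of _ "Suc n" "Suc n" _ "Suc n"]
        mult_smult_assoc_mat[of _ "Suc n" "Suc n" _ "Suc n"]
        power_int_minus smult_smult_mat ac_simps)
  also have "\<dots> = 0\<^sub>m (Suc n) (Suc n)"
    using assms(1) by (subst smult_mat_cancel) (simp_all add: field_simps power2_eq_square)
  finally have lower_left: "(?c \<cdot>\<^sub>m ?F) * (s^2 \<cdot>\<^sub>m ?K') + ?K' * (inverse (s^2) \<cdot>\<^sub>m (?k \<cdot>\<^sub>m ?F))
      = 0\<^sub>m (Suc n) (Suc n)" .
  show ?thesis
    using assms(2,3) KK lower_left
    by (auto simp: less_2_cases_iff sandwich_trace_def M_diag_def L_plus_def L_plus_inv_def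
        mult_smult_distrib[of _ "Suc n" "Suc n" _ "Suc n"])
qed

lemma casimir_Q_eq_trace:
  assumes "s \<noteq> 0"
  shows "casimir_Q s n = M_diag s 0 \<cdot>\<^sub>m aux_mult (L_plus s n) (L_minus s n) 0 0
    + M_diag s 1 \<cdot>\<^sub>m aux_mult (L_plus s n) (L_minus s n) 1 1"
proof -
  let ?c = "(s^2 - inverse (s^2)) / s"
  have "aux_mult (L_plus s n) (L_minus s n) 0 0 = spin_qH s n 2 0 + ?c^2 \<cdot>\<^sub>m (spin_F s n * spin_E n)"
    using spin_qH_mult[OF assms, of n 1 0 1 0]
    by (simp add: aux_mult_def L_plus_def L_minus_def mult_smult_distrib[of _ "Suc n" "Suc n" _ "Suc n"]
        mult_smult_assoc_mat[of _ "Suc n" "Suc n" _ "Suc n"] smult_smult_mat power2_eq_square)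
  moreover have "aux_mult (L_plus s n) (L_minus s n) 1 1 = spin_qH s n (-2) 0"
    using spin_qH_mult[OF assms, of n "-1" 0 "-1" 0] by (simp add: aux_mult_def L_plus_def L_minus_def)
  moreover have "spin_qH s n 2 1 = s^2 \<cdot>\<^sub>m spin_qH s n 2 0"
    "spin_qH s n (-2) (-1) = inverse (s^2) \<cdot>\<^sub>m spin_qH s n (-2) 0"
    using spin_qH_shift[OF assms, of n 2 1] spin_qH_shift[OF assms, of n "-2" "-1"]
    by (simp_all add: power_int_minus)
  moreover have "s^2 * ?c^2 = (s^2 - inverse (s^2))^2"
    using assms by (simp add: field_simps)
  ultimately show ?thesis
    unfolding casimir_Q_def M_diag_def
    by (intro eq_matI) (simp_all add: algebra_simps del: index_mult_mat(1))
qed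

theorem propositionB1:
  fixes s :: complex and n1 n2 :: nat
  assumes "s \<noteq> 0"
    and "\<forall>k::nat. k > 0 \<longrightarrow> (s^2)^k \<noteq> 1"
  shows "\<exists>Linv.
           inverts_mat (on_a1 (n1+1) (n2+1) (L_plus s n1)) Linv
         \<and> inverts_mat Linv (on_a1 (n1+1) (n2+1) (L_plus s n1))
         \<and> kron (1\<^sub>m (n1+1)) (casimir_Q s n2)
             = trace_a ((n1+1) * (n2+1))
                 (on_a1 (n1+1) (n2+1) (L_plus s n1) * on_a2 (n1+1) (n2+1) (L_plus s n2)
                  * on_a2 (n1+1) (n2+1) (L_minus s n2) * Linv * M_a s (n1+1) (n2+1))"
proof -
  let ?d = "Suc n1" and ?e = "Suc n2"
  let ?Linv = "on_a1 ?d ?e (L_plus_inv s n1)" and ?X = "aux_mult (L_plus s n2) (L_minus s n2)"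
  have inverse: "inverts_mat (on_a1 ?d ?e (L_plus s n1)) ?Linv"
    "inverts_mat ?Linv (on_a1 ?d ?e (L_plus s n1))"
    using L_plus_inverse[OF assms(1)] by (simp_all add: inverts_mat_on_a1)
  have "trace_a (?d * ?e) (on_a1 ?d ?e (L_plus s n1) * on_a2 ?d ?e (L_plus s n2)
      * on_a2 ?d ?e (L_minus s n2) * ?Linv * M_a s ?d ?e)
    = trace_a (?d * ?e) (on_a1 ?d ?e (L_plus s n1) * on_a2 ?d ?e ?X
      * on_a1 ?d ?e (\<lambda>\<alpha> \<beta>. M_diag s \<beta> \<cdot>\<^sub>m L_plus_inv s n1 \<alpha> \<beta>))"
    by (simp add: on_a1_on_a2_on_a2_on_a1_M_a)
  also have "\<dots> = kron (1\<^sub>m ?d) (M_diag s 0 \<cdot>\<^sub>m ?X 0 0 + M_diag s 1 \<cdot>\<^sub>m ?X 1 1)"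
    by (rule trace_a_on_a1_on_a2_on_a1_diagonal)
      (simp_all add: aux_mult_carrier_mat sandwich_trace_L_plus[OF assms(1)])
  also have "\<dots> = kron (1\<^sub>m ?d) (casimir_Q s n2)"
    by (simp add: casimir_Q_eq_trace[OF assms(1)])
  finally show ?thesis
    using inverse by (metis Suc_eq_plus1)
qed

end
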